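(* For each $k\in\mathbb N$ there exists $C_k\in[0,\infty)$ such that $\mathbb E(N_t^k)\le C_k t^{-k}$ for all $0<t\le 1$.
   Context: Kakutani's interval-splitting process: let $U_1,U_2,\dots$ be i.i.d. uniform random variables on $[0,1]$. At time $0$ the partition of $[0,1]$ consists of the single interval $[0,1]$. Given the partition at time $n\in\mathbb Z_+$ (which consists of $n+1$ intervals, whose lengths are a.s. distinct), let $[a,b]$ be the interval of maximal length; the partition at time $n+1$ is obtained by replacing $[a,b]$ by the two intervals $[a,a+U_{n+1}(b-a)]$ and $[a+U_{n+1}(b-a),b]$. $M_n$ is the maximal interval length at time $n$, and $N_t:=\inf\{n\in\mathbb Z_+:M_n\le t\}$ for $t>0$. *)

theory Defs
  imports "HOL-Probability.Probability"
begin

text \<open>Intervals [a,b] are represented by pairs (a,b); the length of (a,b) is b - a.\<close>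
definition ivl_len :: "real \<times> real \<Rightarrow> real" where
  "ivl_len p = snd p - fst p"

text \<open>The partition at time n of Kakutani's process driven by the sequence u
  (u (n+1) is the uniform variable used in step n+1; u 0 is unused).
  The interval of maximal length is chosen by Hilbert choice (it is a.s. unique).\<close>
fun kakutani_partition :: "(nat \<Rightarrow> real) \<Rightarrow> nat \<Rightarrow> (real \<times> real) set" where
  "kakutani_partition u 0 = {(0, 1)}"
| "kakutani_partition u (Suc n) =
     (let P = kakutani_partition u n;
          p = (SOME p. p \<in> P \<and> (\<forall>q\<in>P. ivl_len q \<le> ivl_len p));
          a = fst p; b = snd p;
          c = a + u (Suc n) * (b - a)
      in (P - {p}) \<union> {(a, c), (c, b)})"

definition kakutani_max :: "(nat \<Rightarrow> real) \<Rightarrow> nat \<Rightarrow> real" where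
  "kakutani_max u n = Max (ivl_len ` kakutani_partition u n)"

definition kakutani_N :: "(nat \<Rightarrow> real) \<Rightarrow> real \<Rightarrow> enat" where
  "kakutani_N u t = (INF n\<in>{n. kakutani_max u n \<le> t}. enat n)"

end

theory Submission
  imports Defs "HOL-Real_Asymp.Real_Asymp"
begin

text \<open>
  Let Phi_n be the sum of 2 x / t - 1 over the interval lengths x > t present at time n.
  When the longest interval, of length m > t, is split, 2 x / t is additive, so Phi drops
  by 1 unless one of the two pieces has length at most t / 2, which has probability t / m
  under the uniform split point. A second-order bound on exp then shows that
  exp (beta Phi_n + theta n), restricted to the event that M_0, ..., M_n all exceed t, is a
  supermartingale for beta = 1/72 and theta = 1/576. As Phi_0 <= 2 / t, this gives
  P (N_t > n) <= exp (2 beta / t - theta n) <= exp (- theta n / 2) for n >= 32 / t, and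
  summing (n + 1)^k against this tail yields
  E N_t^k <= (33 / t)^k + sum_n (n + 1)^k exp (- theta n / 2).

  The process is followed through the multiset of its interval lengths which, unlike the
  partition built with Hilbert choice, depends measurably on the U_i; on the almost sure
  event that every U_i lies in (0, 1), its maximum is M_n.
\<close>

section \<open>Interval lengths\<close>

fun kakutani_lengths :: "(nat \<Rightarrow> real) \<Rightarrow> nat \<Rightarrow> real multiset" where
  "kakutani_lengths u 0 = {#1#}"
| "kakutani_lengths u (Suc n) =
     (let m = Max (set_mset (kakutani_lengths u n))
      in kakutani_lengths u n - {#m#} + {#m * u (Suc n), m * (1 - u (Suc n))#})"

abbreviation max_length :: "(nat \<Rightarrow> real) \<Rightarrow> nat \<Rightarrow> real" where
  "max_length u n \<equiv> Max (set_mset (kakutani_lengths u n))"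

lemma kakutani_lengths_nonempty: "kakutani_lengths u n \<noteq> {#}"
  by (cases n) (simp_all add: Let_def)

lemma max_length_in: "max_length u n \<in># kakutani_lengths u n"
  using kakutani_lengths_nonempty[of u n] by simp

lemma kakutani_lengths_cong:
  "(\<And>i. i \<in> {1..n} \<Longrightarrow> u i = u' i) \<Longrightarrow> kakutani_lengths u n = kakutani_lengths u' n"
  by (induction n) (auto simp: Let_def)

lemma sum_kakutani_lengths_Suc:
  fixes g :: "real \<Rightarrow> real"
  shows "(\<Sum>x\<in>#kakutani_lengths u (Suc n). g x) = (\<Sum>x\<in>#kakutani_lengths u n. g x)
     - g (max_length u n) + g (max_length u n * u (Suc n)) + g (max_length u n * (1 - u (Suc n)))"
proof -
  define L where "L = kakutani_lengths u n"
  define m where "m = Max (set_mset L)"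
  have "L = add_mset m (L - {#m#})"
    using max_length_in[of u n] by (simp add: L_def m_def)
  then have "(\<Sum>x\<in>#L. g x) = g m + (\<Sum>x\<in>#L - {#m#}. g x)"
    by (metis sum_mset.insert image_mset_add_mset)
  moreover have "kakutani_lengths u (Suc n) =
      add_mset (m * u (Suc n)) (add_mset (m * (1 - u (Suc n))) (L - {#m#}))"
    by (simp add: L_def m_def Let_def)
  ultimately show ?thesis by (simp add: L_def m_def)
qed

definition proper_disjoint_intervals :: "(real \<times> real) set \<Rightarrow> bool" where
  "proper_disjoint_intervals P \<longleftrightarrow> finite P \<and> P \<noteq> {} \<and> (\<forall>p\<in>P. fst p < snd p) \<and>
     (\<forall>p\<in>P. \<forall>q\<in>P. p \<noteq> q \<longrightarrow> snd p \<le> fst q \<or> snd q \<le> fst p)"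

lemma proper_disjoint_intervals_longest:
  assumes "proper_disjoint_intervals P"
  shows "(SOME p. p \<in> P \<and> (\<forall>q\<in>P. ivl_len q \<le> ivl_len p)) \<in> P \<and>
    (\<forall>q\<in>P. ivl_len q \<le> ivl_len (SOME p. p \<in> P \<and> (\<forall>q\<in>P. ivl_len q \<le> ivl_len p)))"
proof (rule someI_ex)
  have fin: "finite P" and "P \<noteq> {}"
    using assms by (auto simp: proper_disjoint_intervals_def)
  then have "Max (ivl_len ` P) \<in> ivl_len ` P"
    by simp
  then obtain p where "p \<in> P" "ivl_len p = Max (ivl_len ` P)"
    by (metis imageE)
  then show "\<exists>p. p \<in> P \<and> (\<forall>q\<in>P. ivl_len q \<le> ivl_len p)"
    using fin by (intro exI[of _ p]) auto
qed

lemma proper_disjoint_intervals_split: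
  assumes P: "proper_disjoint_intervals P" and ab: "(a, b) \<in> P" and c: "a < c" "c < b"
  shows "proper_disjoint_intervals (P - {(a, b)} \<union> {(a, c), (c, b)})"
    and "image_mset ivl_len (mset_set (P - {(a, b)} \<union> {(a, c), (c, b)})) =
      image_mset ivl_len (mset_set P) - {#b - a#} + {#c - a, b - c#}"
proof -
  have fin: "finite P"
    using P by (simp add: proper_disjoint_intervals_def)
  have disj: "snd q \<le> a \<or> b \<le> fst q" if "q \<in> P" "q \<noteq> (a, b)" for q
    using P ab that unfolding proper_disjoint_intervals_def by fastforce
  then have "(a, c) \<notin> P" "(c, b) \<notin> P"
    using c by fastforce+
  then have "mset_set (P - {(a, b)} \<union> {(a, c), (c, b)}) =
      mset_set P - {#(a, b)#} + {#(a, c), (c, b)#}"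
    using c fin ab by (simp add: mset_set_Union mset_set_Diff)
  then show "image_mset ivl_len (mset_set (P - {(a, b)} \<union> {(a, c), (c, b)})) =
      image_mset ivl_len (mset_set P) - {#b - a#} + {#c - a, b - c#}"
    using ab fin by (simp add: image_mset_Diff ivl_len_def)
  have old_new: "snd q \<le> fst r \<or> snd r \<le> fst q"
    if "q \<in> P - {(a, b)}" "r \<in> {(a, c), (c, b)}" for q r
    using disj[of q] that c by auto
  show "proper_disjoint_intervals (P - {(a, b)} \<union> {(a, c), (c, b)})"
    unfolding proper_disjoint_intervals_def
  proof (intro conjI ballI impI)
    show "finite (P - {(a, b)} \<union> {(a, c), (c, b)})" "P - {(a, b)} \<union> {(a, c), (c, b)} \<noteq> {}"
      using fin by auto
    show "fst p < snd p" if "p \<in> P - {(a, b)} \<union> {(a, c), (c, b)}" for p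
      using P c that by (auto simp: proper_disjoint_intervals_def)
    fix p q
    assume "p \<in> P - {(a, b)} \<union> {(a, c), (c, b)}" "q \<in> P - {(a, b)} \<union> {(a, c), (c, b)}" "p \<noteq> q"
    then show "snd p \<le> fst q \<or> snd q \<le> fst p"
      using P old_new[of p q] old_new[of q p] by (auto simp: proper_disjoint_intervals_def)
  qed
qed

lemma kakutani_partition_lengths:
  assumes "\<And>i. i \<in> {1..n} \<Longrightarrow> 0 < u i \<and> u i < 1"
  shows "proper_disjoint_intervals (kakutani_partition u n) \<and>
    image_mset ivl_len (mset_set (kakutani_partition u n)) = kakutani_lengths u n"
  using assms
proof (induction n)
  case 0
  then show ?case by (simp add: proper_disjoint_intervals_def ivl_len_def)
next
  case (Suc n)
  define P where "P = kakutani_partition u n"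
  have P: "proper_disjoint_intervals P"
    and L: "image_mset ivl_len (mset_set P) = kakutani_lengths u n"
    using Suc by (auto simp: P_def)
  obtain a b where p_ab: "(SOME p. p \<in> P \<and> (\<forall>q\<in>P. ivl_len q \<le> ivl_len p)) = (a, b)"
    by fastforce
  with proper_disjoint_intervals_longest[OF P]
  have ab: "(a, b) \<in> P" and longest: "\<forall>q\<in>P. ivl_len q \<le> b - a"
    by (auto simp: ivl_len_def)
  define v where "v = u (Suc n)"
  define c where "c = a + v * (b - a)"
  have "0 < v" "v < 1" "a < b"
    using Suc.prems[of "Suc n"] P ab by (auto simp: v_def proper_disjoint_intervals_def)
  then have "0 < v * (b - a)" "v * (b - a) < b - a"
    by (simp_all add: mult_less_cancel_right2)
  then have c: "a < c" "c < b"
    unfolding c_def by linarith+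
  have step: "kakutani_partition u (Suc n) = P - {(a, b)} \<union> {(a, c), (c, b)}"
    by (simp add: Let_def P_def[symmetric] p_ab c_def v_def)
  have "set_mset (kakutani_lengths u n) = ivl_len ` P"
    using P by (simp add: L[symmetric] proper_disjoint_intervals_def)
  then have "max_length u n = b - a"
    using longest P
    by (intro Max_eqI)
      (auto intro: rev_image_eqI[OF ab] simp: ivl_len_def proper_disjoint_intervals_def)
  then have "kakutani_lengths u (Suc n) =
      kakutani_lengths u n - {#b - a#} + {#(b - a) * v, (b - a) * (1 - v)#}"
    by (simp only: kakutani_lengths.simps Let_def v_def)
  moreover have "c - a = (b - a) * v" "b - c = (b - a) * (1 - v)"
    by (simp_all add: c_def algebra_simps)
  ultimately show ?case
    using proper_disjoint_intervals_split[OF P ab c] unfolding step L by simp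
qed

lemma kakutani_max_eq_max_length:
  assumes "\<And>i. i \<in> {1..n} \<Longrightarrow> 0 < u i \<and> u i < 1"
  shows "kakutani_max u n = max_length u n"
proof -
  from kakutani_partition_lengths[OF assms]
  have "finite (kakutani_partition u n)"
    and L: "image_mset ivl_len (mset_set (kakutani_partition u n)) = kakutani_lengths u n"
    by (auto simp: proper_disjoint_intervals_def)
  then have "set_mset (kakutani_lengths u n) = ivl_len ` kakutani_partition u n"
    by (metis finite_set_mset_mset_set set_image_mset)
  then show ?thesis by (simp add: kakutani_max_def)
qed

section \<open>Measurability\<close>

lemma sum_mset_indicator_pos_iff:
  "0 < (\<Sum>x\<in>#L. indicator A x :: real) \<longleftrightarrow> (\<exists>x\<in>#L. x \<in> A)"
proof (induction L)
  case (add y L)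
  have "0 \<le> (\<Sum>x\<in>#L. indicator A x :: real)"
    using sum_mset_mono[of L "\<lambda>_. 0" "indicator A :: 'a \<Rightarrow> real"] by simp
  with add show ?case
    by (auto simp: indicator_def add_pos_nonneg)
qed simp

lemma Max_gt_iff_sum_indicator_pos:
  "L \<noteq> {#} \<Longrightarrow> a < Max (set_mset L) \<longleftrightarrow> 0 < (\<Sum>x\<in>#L. indicator {a<..} x :: real)"
  by (simp add: sum_mset_indicator_pos_iff Max_gr_iff)

lemma borel_measurable_Max_mset:
  fixes L :: "'s \<Rightarrow> real multiset"
  assumes "\<And>s. L s \<noteq> {#}"
    and "\<And>a. (\<lambda>s. \<Sum>x\<in>#L s. indicator {a<..} x :: real) \<in> borel_measurable S"
  shows "(\<lambda>s. Max (set_mset (L s))) \<in> borel_measurable S"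
proof (rule borel_measurable_iff_greater[THEN iffD2], intro allI)
  fix a :: real
  have "Measurable.pred S (\<lambda>s. 0 < (\<Sum>x\<in>#L s. indicator {a<..} x :: real))"
    using assms(2)[of a] by measurable
  then show "{s \<in> space S. a < Max (set_mset (L s))} \<in> sets S"
    by (simp only: pred_def Max_gt_iff_sum_indicator_pos[OF assms(1)])
qed

lemma measurable_kakutani_lengths:
  fixes V :: "nat \<Rightarrow> 's \<Rightarrow> real" and g :: "real \<Rightarrow> real"
  assumes "\<And>i. i \<in> {1..n} \<Longrightarrow> V i \<in> borel_measurable S"
  shows "(\<lambda>s. max_length (\<lambda>i. V i s) n) \<in> borel_measurable S"
    and "g \<in> borel_measurable borel \<Longrightarrow>
      (\<lambda>s. \<Sum>x\<in>#kakutani_lengths (\<lambda>i. V i s) n. g x) \<in> borel_measurable S"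
proof -
  \<comment> \<open>the maximum is controlled by indicator sums, whose recursion involves the previous maximum\<close>
  have "(\<forall>g::real \<Rightarrow> real. g \<in> borel_measurable borel \<longrightarrow>
      (\<lambda>s. \<Sum>x\<in>#kakutani_lengths (\<lambda>i. V i s) n. g x) \<in> borel_measurable S) \<and>
    (\<lambda>s. max_length (\<lambda>i. V i s) n) \<in> borel_measurable S"
    using assms
  proof (induction n)
    case 0
    then show ?case by simp
  next
    case (Suc n)
    then have sum_n: "\<And>g::real \<Rightarrow> real. g \<in> borel_measurable borel \<Longrightarrow>
        (\<lambda>s. \<Sum>x\<in>#kakutani_lengths (\<lambda>i. V i s) n. g x) \<in> borel_measurable S"
      and [measurable]: "(\<lambda>s. max_length (\<lambda>i. V i s) n) \<in> borel_measurable S"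
      and [measurable]: "V (Suc n) \<in> borel_measurable S"
      by auto
    have sum_Suc: "(\<lambda>s. \<Sum>x\<in>#kakutani_lengths (\<lambda>i. V i s) (Suc n). g x) \<in> borel_measurable S"
      if [measurable]: "g \<in> borel_measurable borel" for g :: "real \<Rightarrow> real"
    proof -
      note sum_n[OF that, measurable]
      show ?thesis unfolding sum_kakutani_lengths_Suc by measurable
    qed
    moreover have "(\<lambda>s. max_length (\<lambda>i. V i s) (Suc n)) \<in> borel_measurable S"
      by (intro borel_measurable_Max_mset kakutani_lengths_nonempty sum_Suc) simp
    ultimately show ?case by blast
  qed
  then show "(\<lambda>s. max_length (\<lambda>i. V i s) n) \<in> borel_measurable S"
    and "g \<in> borel_measurable borel \<Longrightarrow>
      (\<lambda>s. \<Sum>x\<in>#kakutani_lengths (\<lambda>i. V i s) n. g x) \<in> borel_measurable S"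
    by blast+
qed

section \<open>The potential\<close>

definition length_potential :: "real \<Rightarrow> real \<Rightarrow> real" where
  "length_potential t x = (if t < x then 2 * x / t - 1 else 0)"

definition split_change :: "real \<Rightarrow> real \<Rightarrow> real \<Rightarrow> real" where
  "split_change t m v =
     length_potential t (m * v) + length_potential t (m * (1 - v)) - length_potential t m"

definition tilt :: real where
  "tilt = 1 / 72"

\<comment> \<open>\<open>decay_rate = tilt / 4 - 9 * tilt\<^sup>2\<close>\<close>
definition decay_rate :: real where
  "decay_rate = 1 / 576"

lemma length_potential_nonneg: "0 < t \<Longrightarrow> 0 \<le> length_potential t x"
  by (auto simp: length_potential_def field_simps)

lemma length_potential_measurable [measurable]: "length_potential t \<in> borel_measurable borel"
  unfolding length_potential_def by measurable

lemma length_potential_bounds: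
  assumes "0 < t" "0 \<le> x"
  shows "2 * x / t - 2 \<le> length_potential t x" and "length_potential t x \<le> 2 * x / t"
    and "length_potential t x \<le> 2 * x / t - 1 + (indicator {..t/4} x + indicator {..t/2} x) / 2"
  using assms by (auto simp: length_potential_def field_simps indicator_def)

lemma exp_le_quadratic:
  fixes y :: real
  assumes "\<bar>y\<bar> \<le> 1"
  shows "exp y \<le> 1 + y + y\<^sup>2"
proof (cases "0 \<le> y")
  case True
  then show ?thesis using exp_bound[of y] assms by auto
next
  case False
  have "1 - y \<le> exp (- y)"
    using exp_ge_add_one_self[of "- y"] by simp
  then have "exp y \<le> 1 / (1 - y)"
    using False by (simp add: exp_minus field_simps)
  also have "\<dots> \<le> 1 + y + y\<^sup>2"
  proof -
    have "(1 - y) * (1 + y + y\<^sup>2) = 1 - y ^ 3"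
      by (simp add: algebra_simps power2_eq_square power3_eq_cube)
    moreover have "y ^ 3 < 0"
      using False by simp
    ultimately have "1 \<le> (1 + y + y\<^sup>2) * (1 - y)"
      by (simp add: mult.commute)
    then show ?thesis
      using False by (simp add: divide_le_eq)
  qed
  finally show ?thesis .
qed

lemma exp_tilt_split_change_le:
  assumes t: "0 < t" and m: "t < m" and v: "0 \<le> v" "v \<le> 1"
  shows "exp (tilt * split_change t m v) \<le> 1 - tilt + 9 * tilt\<^sup>2 + tilt / 2 *
    (indicator {..t/(4*m)} v + indicator {..t/(2*m)} v +
     indicator {1 - t/(4*m)..} v + indicator {1 - t/(2*m)..} v)"
    (is "_ \<le> _ + tilt / 2 * ?D")
proof -
  have "0 < m" using t m by simp
  then have x: "0 \<le> m * v" "0 \<le> m * (1 - v)" using v by auto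
  have ind: "indicator {..s} (m * v) = (indicator {..s/m} v :: real)"
    "indicator {..s} (m * (1 - v)) = (indicator {1 - s/m..} v :: real)" for s
    using \<open>0 < m\<close> by (simp_all add: indicator_def field_simps)
  have potential_at_m: "length_potential t m = 2 * m / t - 1"
    using m by (simp add: length_potential_def)
  have lengths: "2 * (m * v) / t + 2 * (m * (1 - v)) / t = 2 * m / t"
    using t by (simp add: field_simps)
  note lo = length_potential_bounds[OF t x(1)] and hi = length_potential_bounds[OF t x(2)]
  have "\<bar>split_change t m v\<bar> \<le> 3"
    using lo(1,2) hi(1,2) lengths potential_at_m unfolding split_change_def by linarith
  then have y: "\<bar>tilt * split_change t m v\<bar> \<le> 3 * tilt"
    by (simp add: tilt_def abs_mult)
  \<comment> \<open>\<open>2 x / t\<close> is additive, so splitting costs 1 unless a piece has length at most \<open>t / 2\<close>\<close>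
  have "split_change t m v \<le> -1 + ?D / 2"
    using lo(3) hi(3) lengths potential_at_m
    unfolding split_change_def ind(1,2)[of "t/4"] ind(1,2)[of "t/2"] divide_divide_eq_left
    by argo
  then have "tilt * split_change t m v \<le> - tilt + tilt / 2 * ?D"
    by (simp add: tilt_def field_simps)
  moreover have "(tilt * split_change t m v)\<^sup>2 \<le> 9 * tilt\<^sup>2"
    using y abs_le_square_iff[of "tilt * split_change t m v" "3 * tilt"]
    by (simp add: tilt_def power2_eq_square)
  moreover have "exp (tilt * split_change t m v) \<le>
      1 + tilt * split_change t m v + (tilt * split_change t m v)\<^sup>2"
    using y by (intro exp_le_quadratic) (simp add: tilt_def)
  ultimately show ?thesis by linarith
qed

abbreviation uniform01 :: "real measure" where
  "uniform01 \<equiv> uniform_measure lborel {0..1}"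

lemma prob_space_uniform01: "prob_space uniform01"
  by (rule prob_space_uniform_measure) auto

lemma measure_uniform01_atMost: "0 \<le> x \<Longrightarrow> x \<le> 1 \<Longrightarrow> measure uniform01 {..x} = x"
proof -
  assume "0 \<le> x" "x \<le> 1"
  then have "{0..1} \<inter> {..x} = {0..x}" by auto
  then show ?thesis using \<open>0 \<le> x\<close> by simp
qed

lemma measure_uniform01_atLeast: "0 \<le> x \<Longrightarrow> x \<le> 1 \<Longrightarrow> measure uniform01 {x..} = 1 - x"
proof -
  assume "0 \<le> x" "x \<le> 1"
  then have "{0..1} \<inter> {x..} = {x..1}" by auto
  then show ?thesis using \<open>x \<le> 1\<close> by simp
qed

lemma nn_integral_exp_tilt_split_change_le:
  assumes t: "0 < t" and m: "t < m"
  shows "(\<integral>\<^sup>+v. ennreal (exp (tilt * split_change t m v)) \<partial>uniform01) \<le>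
    ennreal (exp (- decay_rate))"
proof -
  interpret unif: prob_space uniform01 by (rule prob_space_uniform01)
  define a b where "a = t / (4 * m)" and "b = t / (2 * m)"
  have ab: "0 \<le> a" "a \<le> 1" "0 \<le> b" "b \<le> 1" "a + b \<le> 3 / 4"
    using t m by (simp_all add: a_def b_def field_simps)
  define F where "F v = 1 - tilt + 9 * tilt\<^sup>2 + tilt / 2 *
    (indicator {..a} v + indicator {..b} v + indicator {1 - a..} v + indicator {1 - b..} v)" for v
  have ind: "integrable uniform01 (indicator A :: real \<Rightarrow> real)" if "A \<in> sets borel" for A
    using that unif.emeasure_finite[of A]
    by (intro integrable_real_indicator) (auto simp: less_top[symmetric])
  have "integrable uniform01 F"
    unfolding F_def
    by (intro Bochner_Integration.integrable_add Bochner_Integration.integrable_mult_right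
        unif.integrable_const ind) auto
  have "(\<integral>\<^sup>+v. ennreal (exp (tilt * split_change t m v)) \<partial>uniform01) \<le>
      (\<integral>\<^sup>+v. ennreal (F v) \<partial>uniform01)"
    by (intro nn_integral_mono_AE AE_uniform_measureI AE_I2 impI ennreal_leI)
      (use exp_tilt_split_change_le[OF t m] in \<open>auto simp: F_def a_def b_def\<close>)
  also have "\<dots> = ennreal (integral\<^sup>L uniform01 F)"
    by (rule nn_integral_eq_integral[OF \<open>integrable uniform01 F\<close>]) (simp add: F_def tilt_def)
  also have "integral\<^sup>L uniform01 F = 1 - tilt + 9 * tilt\<^sup>2 + tilt * (a + b)"
    using ab ind unif.prob_space unfolding F_def
    by (simp add: measure_uniform01_atMost measure_uniform01_atLeast algebra_simps
        del: measure_uniform_measure)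
  also have "\<dots> \<le> 1 - decay_rate"
    using ab by (simp add: tilt_def decay_rate_def power2_eq_square)
  also have "\<dots> \<le> exp (- decay_rate)"
    using exp_ge_add_one_self[of "- decay_rate"] by simp
  finally show ?thesis
    by (simp add: ennreal_leI)
qed

section \<open>The survival weight\<close>

definition potential :: "real \<Rightarrow> (nat \<Rightarrow> real) \<Rightarrow> nat \<Rightarrow> real" where
  "potential t u n = (\<Sum>x\<in>#kakutani_lengths u n. length_potential t x)"

definition stays_above :: "real \<Rightarrow> (nat \<Rightarrow> real) \<Rightarrow> nat \<Rightarrow> bool" where
  "stays_above t u n \<longleftrightarrow> (\<forall>j\<in>{..n}. t < max_length u j)"

definition survival_weight :: "real \<Rightarrow> (nat \<Rightarrow> real) \<Rightarrow> nat \<Rightarrow> real" where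
  "survival_weight t u n =
     (if stays_above t u n then exp (tilt * potential t u n + decay_rate * n) else 0)"

lemma potential_nonneg: "0 < t \<Longrightarrow> 0 \<le> potential t u n"
  unfolding potential_def using sum_mset_mono[of _ "\<lambda>_. 0" "length_potential t"]
  by (simp add: length_potential_nonneg)

lemma survival_weight_nonneg: "0 \<le> survival_weight t u n"
  by (simp add: survival_weight_def)

lemma survival_weight_cong:
  assumes "\<And>i. i \<in> {1..n} \<Longrightarrow> u i = u' i"
  shows "survival_weight t u n = survival_weight t u' n"
proof -
  have "kakutani_lengths u j = kakutani_lengths u' j" if "j \<le> n" for j
    using assms that by (intro kakutani_lengths_cong) auto
  then show ?thesis
    by (simp add: survival_weight_def potential_def stays_above_def)
qed

lemma measurable_survival_weight:
  fixes V :: "nat \<Rightarrow> 's \<Rightarrow> real"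
  assumes V: "\<And>i. i \<in> {1..n} \<Longrightarrow> V i \<in> borel_measurable S"
  shows "Measurable.pred S (\<lambda>s. stays_above t (\<lambda>i. V i s) n)"
    and "(\<lambda>s. survival_weight t (\<lambda>i. V i s) n) \<in> borel_measurable S"
proof -
  show stays [measurable]: "Measurable.pred S (\<lambda>s. stays_above t (\<lambda>i. V i s) n)"
    unfolding stays_above_def
  proof (intro pred_intros_finite)
    fix j assume "j \<in> {..n}"
    then have [measurable]: "(\<lambda>s. max_length (\<lambda>i. V i s) j) \<in> borel_measurable S"
      using V by (intro measurable_kakutani_lengths) auto
    show "Measurable.pred S (\<lambda>s. t < max_length (\<lambda>i. V i s) j)"
      by measurable
  qed simp
  have [measurable]: "(\<lambda>s. potential t (\<lambda>i. V i s) n) \<in> borel_measurable S"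
    unfolding potential_def using V by (intro measurable_kakutani_lengths) auto
  show "(\<lambda>s. survival_weight t (\<lambda>i. V i s) n) \<in> borel_measurable S"
    unfolding survival_weight_def by measurable
qed

lemma survival_weight_0_le: "0 < t \<Longrightarrow> survival_weight t u 0 \<le> exp (2 * tilt / t)"
  by (auto simp: survival_weight_def potential_def length_potential_def tilt_def)

lemma survival_weight_Suc_le:
  "survival_weight t u (Suc n) \<le> (if t < max_length u n
     then survival_weight t u n * exp (decay_rate + tilt * split_change t (max_length u n) (u (Suc n)))
     else 0)"
proof (cases "stays_above t u (Suc n)")
  case True
  then have "stays_above t u n" "t < max_length u n"
    by (auto simp: stays_above_def)
  moreover have "potential t u (Suc n) =
      potential t u n + split_change t (max_length u n) (u (Suc n))"
    unfolding potential_def split_change_def sum_kakutani_lengths_Suc by simp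
  ultimately show ?thesis
    using True by (simp add: survival_weight_def algebra_simps exp_add[symmetric])
qed (simp add: survival_weight_def)

lemma nn_integral_split_step_le:
  assumes "0 < t" "0 \<le> f"
  shows "(\<integral>\<^sup>+v. ennreal (if t < m then f * exp (decay_rate + tilt * split_change t m v) else 0)
    \<partial>uniform01) \<le> ennreal f"
proof (cases "t < m")
  case True
  have "(\<integral>\<^sup>+v. ennreal (f * exp (decay_rate + tilt * split_change t m v)) \<partial>uniform01) =
      ennreal (f * exp decay_rate) * (\<integral>\<^sup>+v. ennreal (exp (tilt * split_change t m v)) \<partial>uniform01)"
    using \<open>0 \<le> f\<close> by (subst nn_integral_cmult[symmetric])
      (simp_all add: split_change_def exp_add ennreal_mult[symmetric] mult.assoc)
  also have "\<dots> \<le> ennreal (f * exp decay_rate) * ennreal (exp (- decay_rate))"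
    using nn_integral_exp_tilt_split_change_le[OF \<open>0 < t\<close> True] by (rule mult_left_mono) simp
  also have "\<dots> = ennreal f"
    using \<open>0 \<le> f\<close> by (simp add: ennreal_mult[symmetric] mult.assoc exp_add[symmetric])
  finally show ?thesis
    using True by simp
qed simp

section \<open>Integrating out an independent component\<close>

lemma (in prob_space) nn_integral_indep_var:
  assumes indep: "indep_var S X T Y" and g: "g \<in> borel_measurable (S \<Otimes>\<^sub>M T)"
  shows "(\<integral>\<^sup>+\<omega>. g (X \<omega>, Y \<omega>) \<partial>M) = (\<integral>\<^sup>+x. \<integral>\<^sup>+y. g (x, y) \<partial>distr M T Y \<partial>distr M S X)"
proof -
  from indep have X: "random_variable S X" and Y: "random_variable T Y"
    and joint: "distr M S X \<Otimes>\<^sub>M distr M T Y = distr M (S \<Otimes>\<^sub>M T) (\<lambda>\<omega>. (X \<omega>, Y \<omega>))"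
    by (simp_all add: indep_var_distribution_eq)
  interpret Y: prob_space "distr M T Y"
    using Y by (rule prob_space_distr)
  have "(\<integral>\<^sup>+\<omega>. g (X \<omega>, Y \<omega>) \<partial>M) = (\<integral>\<^sup>+z. g z \<partial>distr M (S \<Otimes>\<^sub>M T) (\<lambda>\<omega>. (X \<omega>, Y \<omega>)))"
    using X Y g by (subst nn_integral_distr) auto
  also have "\<dots> = (\<integral>\<^sup>+x. \<integral>\<^sup>+y. g (x, y) \<partial>distr M T Y \<partial>distr M S X)"
    unfolding joint[symmetric] using g by (subst Y.nn_integral_fst) auto
  finally show ?thesis .
qed

lemma (in prob_space) nn_integral_indep_vars_component:
  fixes X :: "'i \<Rightarrow> 'a \<Rightarrow> 'b"
  assumes indep: "indep_vars (\<lambda>_. N) X I" and "A \<subseteq> I" "j \<in> I" "j \<notin> A"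
    and g: "g \<in> borel_measurable (PiM A (\<lambda>_. N) \<Otimes>\<^sub>M N)"
  shows "(\<integral>\<^sup>+\<omega>. g (restrict (\<lambda>i. X i \<omega>) A, X j \<omega>) \<partial>M) =
    (\<integral>\<^sup>+w. \<integral>\<^sup>+v. g (w, v) \<partial>distr M N (X j) \<partial>distr M (PiM A (\<lambda>_. N)) (\<lambda>\<omega>. restrict (\<lambda>i. X i \<omega>) A))"
proof -
  define Z where "Z \<omega> = restrict (\<lambda>i. X i \<omega>) {j}" for \<omega>
  have proj: "(\<lambda>z. z j) \<in> measurable (PiM {j} (\<lambda>_. N)) N"
    by (rule measurable_component_singleton) simp
  have indep_Z: "indep_var (PiM A (\<lambda>_. N)) (\<lambda>\<omega>. restrict (\<lambda>i. X i \<omega>) A) (PiM {j} (\<lambda>_. N)) Z"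
    unfolding Z_def using assms by (intro indep_var_restrict[OF indep]) auto
  then have Z: "random_variable (PiM {j} (\<lambda>_. N)) Z"
    by (simp add: indep_var_distribution_eq)
  have g': "(\<lambda>(w, z). g (w, z j)) \<in> borel_measurable (PiM A (\<lambda>_. N) \<Otimes>\<^sub>M PiM {j} (\<lambda>_. N))"
    using g proj by measurable
  have inner: "(\<integral>\<^sup>+z. g (w, z j) \<partial>distr M (PiM {j} (\<lambda>_. N)) Z) = (\<integral>\<^sup>+v. g (w, v) \<partial>distr M N (X j))"
    if "w \<in> space (PiM A (\<lambda>_. N))" for w
  proof -
    have "(\<lambda>v. g (w, v)) \<in> borel_measurable N"
      using g that by measurable
    moreover have "X j \<in> measurable M N"
      using Z proj by (auto simp: Z_def dest: measurable_compose[OF _ proj])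
    ultimately show ?thesis
      using Z proj by (simp add: nn_integral_distr Z_def)
  qed
  have "(\<integral>\<^sup>+\<omega>. g (restrict (\<lambda>i. X i \<omega>) A, X j \<omega>) \<partial>M) =
      (\<integral>\<^sup>+\<omega>. (\<lambda>(w, z). g (w, z j)) (restrict (\<lambda>i. X i \<omega>) A, Z \<omega>) \<partial>M)"
    by (simp add: Z_def)
  also have "\<dots> = (\<integral>\<^sup>+w. \<integral>\<^sup>+z. g (w, z j) \<partial>distr M (PiM {j} (\<lambda>_. N)) Z
      \<partial>distr M (PiM A (\<lambda>_. N)) (\<lambda>\<omega>. restrict (\<lambda>i. X i \<omega>) A))"
    using nn_integral_indep_var[OF indep_Z g'] by simp
  also have "\<dots> = (\<integral>\<^sup>+w. \<integral>\<^sup>+v. g (w, v) \<partial>distr M N (X j)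
      \<partial>distr M (PiM A (\<lambda>_. N)) (\<lambda>\<omega>. restrict (\<lambda>i. X i \<omega>) A))"
    by (intro nn_integral_cong) (simp add: inner)
  finally show ?thesis .
qed

section \<open>From tails to moments\<close>

lemma enat_less_INF_iff: "enat n < (INF j\<in>{j. P j}. enat j) \<longleftrightarrow> (\<forall>j\<le>n. \<not> P j)"
proof
  assume less: "enat n < (INF j\<in>{j. P j}. enat j)"
  show "\<forall>j\<le>n. \<not> P j"
  proof (intro allI impI notI)
    fix j assume "j \<le> n" "P j"
    then have "(INF j\<in>{j. P j}. enat j) \<le> enat n"
      by (intro INF_lower2[of j]) auto
    with less show False by simp
  qed
next
  assume "\<forall>j\<le>n. \<not> P j"
  then have "enat (Suc n) \<le> (INF j\<in>{j. P j}. enat j)"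
    by (intro INF_greatest) (auto simp: not_le Suc_le_eq)
  then show "enat n < (INF j\<in>{j. P j}. enat j)"
    by (rule less_le_trans[rotated]) simp
qed

lemma ennreal_suminf_eq_top_if_ge_1:
  fixes f :: "nat \<Rightarrow> ennreal"
  assumes "\<And>n. m \<le> n \<Longrightarrow> 1 \<le> f n"
  shows "suminf f = top"
proof (rule ccontr)
  have unbounded: "of_nat K \<le> suminf f" for K
  proof -
    have "of_nat K = (\<Sum>n\<in>{m..<m + K}. 1 :: ennreal)"
      by simp
    also have "\<dots> \<le> (\<Sum>n\<in>{m..<m + K}. f n)"
      using assms by (intro sum_mono) auto
    also have "\<dots> \<le> suminf f"
      by (rule sum_le_suminf) auto
    finally show ?thesis .
  qed
  assume "suminf f \<noteq> top"
  then obtain K where "suminf f < of_nat K"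
    using ennreal_Ex_less_of_nat[of "suminf f"] top.not_eq_extremum by blast
  with unbounded[of K] show False
    by simp
qed

lemma ennreal_of_enat_power_le_tail_sum:
  fixes N :: enat
  shows "ennreal_of_enat N ^ k \<le>
    of_nat m ^ k + (\<Sum>n. (if m \<le> n then of_nat (Suc n) ^ k else 0) * of_bool (enat n < N))"
    (is "_ \<le> _ + suminf ?f")
proof (cases N)
  case (enat l)
  show ?thesis
  proof (cases "l \<le> m")
    case True
    then have "ennreal_of_enat N ^ k \<le> of_nat m ^ k"
      using enat by (intro power_mono) simp_all
    then show ?thesis
      by (rule order_trans) simp
  next
    case False
    then have "ennreal_of_enat N ^ k = ?f (l - 1)"
      using enat by simp
    also have "\<dots> = (\<Sum>n\<in>{l - 1}. ?f n)"
      by simp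
    also have "\<dots> \<le> suminf ?f"
      by (rule sum_le_suminf) auto
    finally show ?thesis
      by (rule order_trans) simp
  qed
next
  case infinity
  show ?thesis
  proof (cases "k = 0")
    case False
    have "suminf ?f = top"
      using infinity by (intro ennreal_suminf_eq_top_if_ge_1[of m]) (auto intro!: one_le_power)
    then show ?thesis
      by simp
  qed simp
qed

lemma summable_poly_times_exp:
  assumes "0 < c"
  shows "summable (\<lambda>n. real (Suc n) ^ k * exp (- c * real n))"
proof (rule summable_comparison_test_bigo)
  show "summable (\<lambda>n. norm (real n powr - 2))"
    by (simp add: summable_real_powr_iff)
  show "(\<lambda>n. real (Suc n) ^ k * exp (- c * real n)) \<in> O(\<lambda>n. real n powr - 2)"
    using assms by real_asymp
qed

lemma tail_exponent_le:
  assumes "0 < t" "32 / t \<le> real n"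
  shows "2 * tilt / t - decay_rate * n \<le> - (decay_rate / 2) * n"
proof -
  have "32 \<le> real n * t"
    using assms by (simp add: field_simps)
  then show ?thesis
    using assms(1) by (simp add: tilt_def decay_rate_def field_simps)
qed

definition moment_constant :: "nat \<Rightarrow> real" where
  "moment_constant k = 33 ^ k + (\<Sum>n. real (Suc n) ^ k * exp (- (decay_rate / 2) * n))"

lemma summable_moment_series: "summable (\<lambda>n. real (Suc n) ^ k * exp (- (decay_rate / 2) * n))"
  by (rule summable_poly_times_exp) (simp add: decay_rate_def)

lemma moment_constant_nonneg: "0 \<le> moment_constant k"
  unfolding moment_constant_def using summable_moment_series by (simp add: suminf_nonneg)

lemma real_nat_ceiling_32_div_le:
  assumes "0 < t" "t \<le> 1"
  shows "real (nat \<lceil>32 / t\<rceil>) \<le> 33 / t"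
proof -
  have "real (nat \<lceil>32 / t\<rceil>) \<le> 32 / t + 1"
    using assms(1) of_int_ceiling_le_add_one[of "32 / t"] by simp
  also have "\<dots> \<le> 33 / t"
    using assms by (simp add: field_simps)
  finally show ?thesis .
qed

lemma moment_constant_bound:
  assumes "0 < t" "t \<le> 1"
  shows "real (nat \<lceil>32 / t\<rceil>) ^ k + (\<Sum>n. real (Suc n) ^ k * exp (- (decay_rate / 2) * n)) \<le>
    moment_constant k / t ^ k"
proof -
  define S where "S = (\<Sum>n. real (Suc n) ^ k * exp (- (decay_rate / 2) * n))"
  have "0 \<le> S"
    unfolding S_def using summable_moment_series by (simp add: suminf_nonneg)
  moreover have "0 < t ^ k" "t ^ k \<le> 1"
    using assms by (simp_all add: power_le_one)
  ultimately have "S \<le> S / t ^ k"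
    by (simp add: le_divide_eq mult_left_le)
  moreover have "real (nat \<lceil>32 / t\<rceil>) ^ k \<le> (33 / t) ^ k"
    using real_nat_ceiling_32_div_le[OF assms] by (intro power_mono) simp_all
  moreover have "moment_constant k / t ^ k = (33 / t) ^ k + S / t ^ k"
    by (simp add: moment_constant_def S_def add_divide_distrib power_divide)
  ultimately show ?thesis
    unfolding S_def by linarith
qed

section \<open>Kakutani's process driven by independent uniforms\<close>

locale kakutani_process = prob_space M for M :: "'a measure" +
  fixes U :: "nat \<Rightarrow> 'a \<Rightarrow> real"
  assumes indep: "indep_vars (\<lambda>_. borel) U {1..}"
    and uniform: "\<And>i. i \<ge> 1 \<Longrightarrow> distr M borel (U i) = uniform01"
begin

abbreviation survival_event :: "real \<Rightarrow> nat \<Rightarrow> 'a set" where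
  "survival_event t n \<equiv> {\<omega> \<in> space M. stays_above t (\<lambda>i. U i \<omega>) n}"

lemma U_measurable: "1 \<le> i \<Longrightarrow> U i \<in> borel_measurable M"
  using indep by (auto simp: indep_vars_def)

lemma AE_U_in_open_unit: "AE \<omega> in M. \<forall>i\<in>{1..}. 0 < U i \<omega> \<and> U i \<omega> < 1"
proof (rule AE_ball_countable')
  fix i :: nat assume "i \<in> {1..}"
  then have i: "1 \<le> i" by simp
  have "AE x in lborel. (x::real) \<noteq> 0" "AE x in lborel. (x::real) \<noteq> 1"
    by (rule AE_lborel_singleton)+
  then have "AE v in uniform01. 0 < v \<and> v < 1"
    by (intro AE_uniform_measureI) auto
  then have "AE v in distr M borel (U i). 0 < v \<and> v < 1"
    by (simp only: uniform[OF i])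
  then show "AE \<omega> in M. 0 < U i \<omega> \<and> U i \<omega> < 1"
    by (rule AE_distrD[OF U_measurable[OF i]])
qed simp

lemma nn_integral_survival_weight_Suc_le:
  assumes "0 < t"
  shows "(\<integral>\<^sup>+\<omega>. survival_weight t (\<lambda>i. U i \<omega>) (Suc n) \<partial>M) \<le>
    (\<integral>\<^sup>+\<omega>. survival_weight t (\<lambda>i. U i \<omega>) n \<partial>M)"
proof -
  let ?P = "PiM {1..n} (\<lambda>_. borel) :: (nat \<Rightarrow> real) measure"
  define Y where "Y \<omega> = restrict (\<lambda>i. U i \<omega>) {1..n}" for \<omega>
  define h where "h = (\<lambda>(w, v). ennreal (if t < max_length w n
    then survival_weight t w n * exp (decay_rate + tilt * split_change t (max_length w n) v)
    else 0))"
  have coord: "(\<lambda>w. w i) \<in> borel_measurable ?P" if "i \<in> {1..n}" for i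
    using that by (rule measurable_component_singleton)
  note [measurable] =
    measurable_survival_weight(2)[OF coord] measurable_kakutani_lengths(1)[OF coord]
  have Y_meas: "Y \<in> measurable M ?P"
    unfolding Y_def by (intro measurable_restrict U_measurable) auto
  have h_meas: "h \<in> borel_measurable (?P \<Otimes>\<^sub>M borel)"
    unfolding h_def split_change_def by measurable
  have Y_eq: "survival_weight t (Y \<omega>) n = survival_weight t (\<lambda>i. U i \<omega>) n"
    "kakutani_lengths (Y \<omega>) n = kakutani_lengths (\<lambda>i. U i \<omega>) n" for \<omega>
    by (auto simp: Y_def intro: survival_weight_cong kakutani_lengths_cong)
  have "(\<integral>\<^sup>+\<omega>. survival_weight t (\<lambda>i. U i \<omega>) (Suc n) \<partial>M) \<le> (\<integral>\<^sup>+\<omega>. h (Y \<omega>, U (Suc n) \<omega>) \<partial>M)"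
    by (intro nn_integral_mono ord_le_eq_trans[OF ennreal_leI[OF survival_weight_Suc_le]])
      (simp add: h_def Y_eq)
  also have "\<dots> = (\<integral>\<^sup>+w. \<integral>\<^sup>+v. h (w, v) \<partial>uniform01 \<partial>distr M ?P Y)"
    unfolding Y_def
    by (subst nn_integral_indep_vars_component[OF indep _ _ _ h_meas]) (auto simp: uniform)
  also have "\<dots> \<le> (\<integral>\<^sup>+w. survival_weight t w n \<partial>distr M ?P Y)"
    by (intro nn_integral_mono)
      (simp add: h_def nn_integral_split_step_le[OF assms] survival_weight_nonneg)
  also have "\<dots> = (\<integral>\<^sup>+\<omega>. survival_weight t (Y \<omega>) n \<partial>M)"
    by (rule nn_integral_distr) (use Y_meas in measurable)
  also have "\<dots> = (\<integral>\<^sup>+\<omega>. survival_weight t (\<lambda>i. U i \<omega>) n \<partial>M)"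
    by (simp add: Y_eq)
  finally show ?thesis .
qed

lemma measurable_survival_weight_U [measurable]:
  "Measurable.pred M (\<lambda>\<omega>. stays_above t (\<lambda>i. U i \<omega>) n)"
  "(\<lambda>\<omega>. survival_weight t (\<lambda>i. U i \<omega>) n) \<in> borel_measurable M"
proof -
  have U: "\<And>i. i \<in> {1..n} \<Longrightarrow> U i \<in> borel_measurable M"
    using U_measurable by simp
  show "Measurable.pred M (\<lambda>\<omega>. stays_above t (\<lambda>i. U i \<omega>) n)"
    "(\<lambda>\<omega>. survival_weight t (\<lambda>i. U i \<omega>) n) \<in> borel_measurable M"
    using measurable_survival_weight[where V=U, OF U] by blast+
qed

lemma nn_integral_survival_weight_le:
  assumes "0 < t"
  shows "(\<integral>\<^sup>+\<omega>. survival_weight t (\<lambda>i. U i \<omega>) n \<partial>M) \<le> ennreal (exp (2 * tilt / t))"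
proof (induction n)
  case 0
  have "(\<integral>\<^sup>+\<omega>. survival_weight t (\<lambda>i. U i \<omega>) 0 \<partial>M) \<le> (\<integral>\<^sup>+\<omega>. exp (2 * tilt / t) \<partial>M)"
    by (intro nn_integral_mono ennreal_leI survival_weight_0_le assms)
  then show ?case
    by (simp add: emeasure_space_1)
next
  case (Suc n)
  with nn_integral_survival_weight_Suc_le[OF assms, of n] show ?case
    by (rule order_trans)
qed

lemma emeasure_survival_event_le:
  assumes "0 < t"
  shows "emeasure M (survival_event t n) \<le>
    ennreal (exp (2 * tilt / t - decay_rate * n))"
proof -
  have "indicator (survival_event t n) \<omega> \<le>
      ennreal (exp (- decay_rate * n)) * survival_weight t (\<lambda>i. U i \<omega>) n" for \<omega>
  proof (cases "stays_above t (\<lambda>i. U i \<omega>) n")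
    case True
    have "1 \<le> exp (- decay_rate * n) * survival_weight t (\<lambda>i. U i \<omega>) n"
      using True potential_nonneg[OF assms, of "\<lambda>i. U i \<omega>" n]
      by (simp add: survival_weight_def exp_add[symmetric] tilt_def)
    then show ?thesis
      by (simp add: indicator_def ennreal_mult[symmetric] survival_weight_nonneg)
  qed simp
  note pointwise = this
  have "emeasure M (survival_event t n) =
      (\<integral>\<^sup>+\<omega>. indicator (survival_event t n) \<omega> \<partial>M)"
    by (rule nn_integral_indicator[symmetric]) measurable
  also have "\<dots> \<le> (\<integral>\<^sup>+\<omega>. ennreal (exp (- decay_rate * n)) * survival_weight t (\<lambda>i. U i \<omega>) n \<partial>M)"
    by (intro nn_integral_mono pointwise)
  also have "\<dots> = ennreal (exp (- decay_rate * n)) * (\<integral>\<^sup>+\<omega>. survival_weight t (\<lambda>i. U i \<omega>) n \<partial>M)"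
    by (rule nn_integral_cmult) measurable
  also have "\<dots> \<le> ennreal (exp (- decay_rate * n)) * ennreal (exp (2 * tilt / t))"
    by (intro mult_left_mono nn_integral_survival_weight_le assms) simp
  also have "\<dots> = ennreal (exp (2 * tilt / t - decay_rate * n))"
    by (simp add: ennreal_mult[symmetric] exp_add[symmetric])
  finally show ?thesis .
qed

lemma AE_kakutani_N_greater_iff:
  "AE \<omega> in M. \<forall>n. enat n < kakutani_N (\<lambda>i. U i \<omega>) t \<longleftrightarrow> stays_above t (\<lambda>i. U i \<omega>) n"
  using AE_U_in_open_unit
proof eventually_elim
  case (elim \<omega>)
  then have "kakutani_max (\<lambda>i. U i \<omega>) j = max_length (\<lambda>i. U i \<omega>) j" for j
    by (intro kakutani_max_eq_max_length) auto
  then show ?case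
    by (simp add: kakutani_N_def enat_less_INF_iff stays_above_def not_le Ball_def)
qed

lemma emeasure_survival_event_le_decay:
  assumes "0 < t" "32 / t \<le> real n"
  shows "emeasure M (survival_event t n) \<le> ennreal (exp (- (decay_rate / 2) * n))"
proof -
  have "emeasure M (survival_event t n) \<le>
      ennreal (exp (2 * tilt / t - decay_rate * n))"
    by (rule emeasure_survival_event_le[OF assms(1)])
  also have "\<dots> \<le> ennreal (exp (- (decay_rate / 2) * n))"
    using tail_exponent_le[OF assms] by (intro ennreal_leI) simp
  finally show ?thesis .
qed

lemma nn_integral_kakutani_N_power_le_tail_sum:
  "(\<integral>\<^sup>+\<omega>. ennreal_of_enat (kakutani_N (\<lambda>i. U i \<omega>) t) ^ k \<partial>M) \<le> of_nat m ^ k +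
    (\<Sum>n. (if m \<le> n then of_nat (Suc n) ^ k else 0) * emeasure M (survival_event t n))"
proof -
  let ?c = "\<lambda>n. if m \<le> n then of_nat (Suc n) ^ k else 0 :: ennreal"
  have "AE \<omega> in M. ennreal_of_enat (kakutani_N (\<lambda>i. U i \<omega>) t) ^ k \<le>
      of_nat m ^ k + (\<Sum>n. ?c n * indicator (survival_event t n) \<omega>)"
    using AE_kakutani_N_greater_iff[of t] AE_space[of M]
  proof eventually_elim
    case (elim \<omega>)
    then have "indicator (survival_event t n) \<omega> = (of_bool (enat n < kakutani_N (\<lambda>i. U i \<omega>) t) :: ennreal)" for n
      by (simp add: indicator_def)
    then show ?case
      using ennreal_of_enat_power_le_tail_sum[of "kakutani_N (\<lambda>i. U i \<omega>) t" k m] by simp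
  qed
  then have "(\<integral>\<^sup>+\<omega>. ennreal_of_enat (kakutani_N (\<lambda>i. U i \<omega>) t) ^ k \<partial>M) \<le>
      (\<integral>\<^sup>+\<omega>. of_nat m ^ k + (\<Sum>n. ?c n * indicator (survival_event t n) \<omega>) \<partial>M)"
    by (rule nn_integral_mono_AE)
  also have "\<dots> = of_nat m ^ k + (\<Sum>n. ?c n * emeasure M (survival_event t n))"
    by (simp add: nn_integral_add nn_integral_suminf nn_integral_cmult_indicator emeasure_space_1)
  finally show ?thesis .
qed

lemma nn_integral_kakutani_N_power_le:
  assumes "0 < t" "t \<le> 1"
  shows "(\<integral>\<^sup>+\<omega>. ennreal_of_enat (kakutani_N (\<lambda>i. U i \<omega>) t) ^ k \<partial>M) \<le>
    ennreal (moment_constant k / t ^ k)"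
proof -
  define m where "m = nat \<lceil>32 / t\<rceil>"
  define S where "S = (\<Sum>n. real (Suc n) ^ k * exp (- (decay_rate / 2) * n))"
  have term_le: "(if m \<le> n then of_nat (Suc n) ^ k else 0) * emeasure M (survival_event t n)
      \<le> ennreal (real (Suc n) ^ k * exp (- (decay_rate / 2) * n))" for n
  proof (cases "m \<le> n")
    case True
    then have "32 / t \<le> real n"
      unfolding m_def by linarith
    have "ennreal (real (Suc n) ^ k * exp (- (decay_rate / 2) * n)) =
        of_nat (Suc n) ^ k * ennreal (exp (- (decay_rate / 2) * n))"
      by (simp add: ennreal_mult ennreal_of_nat_eq_real_of_nat ennreal_power del: of_nat_Suc)
    then show ?thesis
      using True emeasure_survival_event_le_decay[OF assms(1) \<open>32 / t \<le> real n\<close>]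
      by (simp add: mult_left_mono del: of_nat_Suc)
  qed simp
  have "(\<integral>\<^sup>+\<omega>. ennreal_of_enat (kakutani_N (\<lambda>i. U i \<omega>) t) ^ k \<partial>M) \<le> of_nat m ^ k +
      (\<Sum>n. (if m \<le> n then of_nat (Suc n) ^ k else 0) * emeasure M (survival_event t n))"
    by (rule nn_integral_kakutani_N_power_le_tail_sum)
  also have "\<dots> \<le> of_nat m ^ k + (\<Sum>n. ennreal (real (Suc n) ^ k * exp (- (decay_rate / 2) * n)))"
    by (intro add_left_mono suminf_le term_le) auto
  also have "\<dots> = ennreal (real m ^ k + S)"
    using summable_moment_series
    by (simp add: S_def suminf_ennreal2 ennreal_plus ennreal_of_nat_eq_real_of_nat ennreal_power
        suminf_nonneg)
  also have "\<dots> \<le> ennreal (moment_constant k / t ^ k)"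
    unfolding m_def S_def by (intro ennreal_leI moment_constant_bound assms)
  finally show ?thesis .
qed

end

theorem lemma2p2:
  fixes M :: "'a measure" and U :: "nat \<Rightarrow> 'a \<Rightarrow> real" and k :: nat
  assumes "prob_space M"
    and "prob_space.indep_vars M (\<lambda>_. borel) U {1..}"
    and "\<And>i. i \<ge> 1 \<Longrightarrow> distr M borel (U i) = uniform_measure lborel {0..1}"
  shows "\<exists>C\<ge>0. \<forall>t::real. 0 < t \<and> t \<le> 1 \<longrightarrow>
           (\<integral>\<^sup>+ \<omega>. (ennreal_of_enat (kakutani_N (\<lambda>i. U i \<omega>) t)) ^ k \<partial>M) \<le> ennreal (C / t ^ k)"
proof -
  interpret kakutani_process M U
    using assms by (simp add: kakutani_process_def kakutani_process_axioms_def)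
  show ?thesis
    using moment_constant_nonneg nn_integral_kakutani_N_power_le by blast
qed

end
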